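(* Let $b>0$, let $q=2b$ be the reducer capacity, and let $X$ and $Y$ be disjoint lists of inputs, each input of size at most $b$; let $sum_x$ and $sum_y$ be the sums of the sizes of the inputs of $X$ and $Y$, respectively, with $sum_x>q$ and $sum_y>q$. Consider the following algorithm: pack the inputs of $X$ into bins of capacity $b$ and the inputs of $Y$ into bins of capacity $b$, using First-Fit Decreasing (or Best-Fit Decreasing); then, for each pair consisting of an $X$-bin and a $Y$-bin, create one reducer receiving all inputs of both bins. The resulting X2Y mapping schema uses at most $\frac{4\cdot sum_x\cdot sum_y}{b^2}$ reducers and has communication cost at most $\frac{4\cdot sum_x\cdot sum_y}{b}$.
   Context: An X2Y mapping schema for lists $X$ and $Y$ with capacity $q$ is an assignment of the inputs of $X\cup Y$ to a collection of reducers (each input may go to several reducers) such that every reducer receives inputs of total size at most $q$ and for every $x\in X$ and $y\in Y$ there is a reducer receiving both. The communication cost is the sum over reducers of the total size of the inputs assigned to it. *)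

theory Defs
  imports Complex_Main "HOL-Library.Multiset"
begin

definition load :: "('a \<Rightarrow> real) \<Rightarrow> 'a list \<Rightarrow> real" where
  "load w bin = sum_list (map w bin)"

fun ff_insert :: "real \<Rightarrow> ('a \<Rightarrow> real) \<Rightarrow> 'a \<Rightarrow> 'a list list \<Rightarrow> 'a list list" where
  "ff_insert c w x [] = [[x]]"
| "ff_insert c w x (bin # bins) =
     (if load w bin + w x \<le> c then (x # bin) # bins else bin # ff_insert c w x bins)"

definition bf_insert :: "real \<Rightarrow> ('a \<Rightarrow> real) \<Rightarrow> 'a \<Rightarrow> 'a list list \<Rightarrow> 'a list list" where
  "bf_insert c w x bins =
     (let fits = filter (\<lambda>i. load w (bins ! i) + w x \<le> c) [0..<length bins] in
      if fits = [] then bins @ [[x]]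
      else let m = Max ((\<lambda>i. load w (bins ! i)) ` set fits);
               i = hd (filter (\<lambda>i. load w (bins ! i) = m) fits)
           in bins[i := x # (bins ! i)])"

definition pack :: "('a \<Rightarrow> 'a list list \<Rightarrow> 'a list list) \<Rightarrow> 'a list \<Rightarrow> 'a list list" where
  "pack ins xs = foldl (\<lambda>bins x. ins x bins) [] xs"

definition decreasing_order :: "('a \<Rightarrow> real) \<Rightarrow> 'a list \<Rightarrow> 'a list \<Rightarrow> bool" where
  "decreasing_order w xs xs' \<longleftrightarrow> mset xs' = mset xs \<and> sorted_wrt (\<lambda>a c. w a \<ge> w c) xs'"

text \<open>First-Fit Decreasing / Best-Fit Decreasing with bin capacity c, w.r.t. a decreasing order xs'.\<close>
definition ffd :: "real \<Rightarrow> ('a \<Rightarrow> real) \<Rightarrow> 'a list \<Rightarrow> 'a list list" where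
  "ffd c w xs' = pack (ff_insert c w) xs'"

definition bfd :: "real \<Rightarrow> ('a \<Rightarrow> real) \<Rightarrow> 'a list \<Rightarrow> 'a list list" where
  "bfd c w xs' = pack (bf_insert c w) xs'"

text \<open>Reducers: one reducer per pair (X-bin, Y-bin), receiving all inputs of both bins.
  A mapping schema is a list of reducers, each reducer being the set of inputs assigned to it.\<close>
definition pair_reducers :: "'a list list \<Rightarrow> 'a list list \<Rightarrow> 'a set list" where
  "pair_reducers BX BY = [set bx \<union> set by. bx \<leftarrow> BX, by \<leftarrow> BY]"

definition x2y_mapping_schema ::
  "real \<Rightarrow> ('a \<Rightarrow> real) \<Rightarrow> 'a list \<Rightarrow> 'a list \<Rightarrow> 'a set list \<Rightarrow> bool" where
  "x2y_mapping_schema q w X Y R \<longleftrightarrow>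
     (\<forall>r\<in>set R. r \<subseteq> set X \<union> set Y \<and> sum w r \<le> q) \<and>
     (\<forall>x\<in>set X. \<forall>y\<in>set Y. \<exists>r\<in>set R. x \<in> r \<and> y \<in> r)"

definition comm_cost :: "('a \<Rightarrow> real) \<Rightarrow> 'a set list \<Rightarrow> real" where
  "comm_cost w R = sum_list (map (\<lambda>r. sum w r) R)"

end

theory Submission
  imports Defs
begin

text \<open>Both FFD and BFD are Any-Fit algorithms: a new bin is opened only when the item fits
  into no open bin. Hence any two bins together are overfull, so the number of bins is at most
  twice the total size divided by the capacity. With
  at most \<open>2 sum_x / b\<close> X-bins and \<open>2 sum_y / b\<close> Y-bins there are at most
  \<open>4 sum_x sum_y / b\<^sup>2\<close> reducers, and since every X-bin meets every Y-bin the communication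
  cost is \<open>|BY| sum_x + |BX| sum_y \<le> 4 sum_x sum_y / b\<close>.\<close>

lemma load_Cons [simp]: "load w (x # bin) = w x + load w bin"
  by (simp add: load_def)

lemma sum_list_map_load: "sum_list (map (load w) B) = sum_list (map w (concat B))"
  by (induction B) (auto simp: load_def)

definition any_fit_step :: "real \<Rightarrow> ('a \<Rightarrow> real) \<Rightarrow> 'a \<Rightarrow> 'a list list \<Rightarrow> 'a list list \<Rightarrow> bool" where
  "any_fit_step c w x B B' \<longleftrightarrow>
     (B' = B @ [[x]] \<and> (\<forall>bin\<in>set B. c < load w bin + w x)) \<or>
     (\<exists>i<length B. load w (B ! i) + w x \<le> c \<and> B' = B[i := x # B ! i])"

lemma ff_insert_any_fit_step: "any_fit_step c w x B (ff_insert c w x B)"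
proof (induction B)
  case (Cons bin B)
  show ?case
  proof (cases "load w bin + w x \<le> c")
    case True
    then show ?thesis
      unfolding any_fit_step_def by (intro disjI2 exI[of _ 0]) auto
  next
    case False
    from Cons.IH consider
      "ff_insert c w x B = B @ [[x]]" "\<forall>bin\<in>set B. c < load w bin + w x"
      | i where "i < length B" "load w (B ! i) + w x \<le> c" "ff_insert c w x B = B[i := x # B ! i]"
      unfolding any_fit_step_def by blast
    then show ?thesis
    proof cases
      case 1
      with False show ?thesis
        unfolding any_fit_step_def by auto
    next
      case (2 i)
      with False show ?thesis
        unfolding any_fit_step_def by (intro disjI2 exI[of _ "Suc i"]) auto
    qed
  qed
qed (simp add: any_fit_step_def)

lemma bf_insert_any_fit_step: "any_fit_step c w x B (bf_insert c w x B)"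
proof -
  define fits where "fits = filter (\<lambda>i. load w (B ! i) + w x \<le> c) [0..<length B]"
  show ?thesis
  proof (cases "fits = []")
    case True
    then have "\<forall>bin\<in>set B. c < load w bin + w x"
      by (auto simp: fits_def filter_empty_conv in_set_conv_nth not_le)
    with True show ?thesis
      unfolding any_fit_step_def bf_insert_def fits_def[symmetric] by simp
  next
    case False
    define m where "m = Max ((\<lambda>i. load w (B ! i)) ` set fits)"
    define i where "i = hd (filter (\<lambda>i. load w (B ! i) = m) fits)"
    have "m \<in> (\<lambda>i. load w (B ! i)) ` set fits"
      unfolding m_def using False by (intro Max_in) auto
    then have "filter (\<lambda>i. load w (B ! i) = m) fits \<noteq> []"
      by (auto simp: filter_empty_conv)
    then have "i \<in> set fits"
      unfolding i_def using hd_in_set by fastforce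
    then have "i < length B" "load w (B ! i) + w x \<le> c"
      by (auto simp: fits_def)
    moreover have "bf_insert c w x B = B[i := x # B ! i]"
      using False unfolding bf_insert_def fits_def[symmetric] by (simp add: Let_def m_def i_def)
    ultimately show ?thesis
      unfolding any_fit_step_def by blast
  qed
qed

definition any_fit_packing :: "real \<Rightarrow> ('a \<Rightarrow> real) \<Rightarrow> 'a list list \<Rightarrow> bool" where
  "any_fit_packing c w B \<longleftrightarrow>
     (\<forall>bin\<in>set B. load w bin \<le> c) \<and> sorted_wrt (\<lambda>u v. c < load w u + load w v) B"

lemma mset_concat_list_update_Cons:
  assumes "i < length B"
  shows "mset (concat (B[i := x # B ! i])) = add_mset x (mset (concat B))"
proof -
  have split: "B = take i B @ B ! i # drop (Suc i) B"
    using assms by (simp add: id_take_nth_drop)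
  have "B[i := x # B ! i] = take i B @ (x # B ! i) # drop (Suc i) B"
    using assms by (simp add: upd_conv_take_nth_drop)
  then show ?thesis
    by (subst (2) split) simp
qed

lemma any_fit_packing_open_bin:
  assumes "any_fit_packing c w B" and "w x \<le> c" and "\<forall>bin\<in>set B. c < load w bin + w x"
  shows "any_fit_packing c w (B @ [[x]])"
  using assms by (auto simp: any_fit_packing_def sorted_wrt_append load_def)

lemma any_fit_packing_fill_bin:
  assumes packing: "any_fit_packing c w B" and "0 \<le> w x"
    and i: "i < length B" "load w (B ! i) + w x \<le> c"
  shows "any_fit_packing c w (B[i := x # B ! i])"
proof -
  let ?B' = "B[i := x # B ! i]"
  have load_mono: "load w (B ! j) \<le> load w (?B' ! j)" if "j < length B" for j
    using that \<open>0 \<le> w x\<close> i by (cases "j = i") auto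
  have "load w bin \<le> c" if "bin \<in> set ?B'" for bin
  proof -
    obtain j where j: "j < length B" "bin = ?B' ! j"
      using \<open>bin \<in> set ?B'\<close> by (auto simp: in_set_conv_nth)
    show ?thesis
      using j i packing by (cases "j = i") (auto simp: any_fit_packing_def add.commute)
  qed
  moreover have "sorted_wrt (\<lambda>u v. c < load w u + load w v) ?B'"
    unfolding sorted_wrt_iff_nth_less
  proof (intro allI impI)
    fix j k assume jk: "j < k" "k < length ?B'"
    then have "c < load w (B ! j) + load w (B ! k)"
      using packing by (auto simp: any_fit_packing_def sorted_wrt_iff_nth_less)
    with jk load_mono[of j] load_mono[of k] show "c < load w (?B' ! j) + load w (?B' ! k)"
      by simp
  qed
  ultimately show ?thesis
    by (simp add: any_fit_packing_def)
qed

lemma any_fit_step_preserves: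
  assumes "any_fit_step c w x B B'" and "any_fit_packing c w B" and "0 \<le> w x" "w x \<le> c"
  shows "any_fit_packing c w B' \<and> mset (concat B') = add_mset x (mset (concat B))"
  using assms(1) unfolding any_fit_step_def
proof (elim disjE exE conjE)
  assume "B' = B @ [[x]]" "\<forall>bin\<in>set B. c < load w bin + w x"
  then show ?thesis
    using any_fit_packing_open_bin assms(2,4) by simp
next
  fix i assume "i < length B" "load w (B ! i) + w x \<le> c" "B' = B[i := x # B ! i]"
  then show ?thesis
    using any_fit_packing_fill_bin[OF assms(2,3)] mset_concat_list_update_Cons by simp
qed

lemma pack_any_fit:
  assumes "\<And>x B. any_fit_step c w x B (ins x B)" and "\<forall>x\<in>set xs. 0 \<le> w x \<and> w x \<le> c"
  shows "any_fit_packing c w (pack ins xs) \<and> mset (concat (pack ins xs)) = mset xs"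
  using assms(2)
proof (induction xs rule: rev_induct)
  case Nil
  then show ?case by (simp add: pack_def any_fit_packing_def)
next
  case (snoc x xs)
  then show ?case
    using any_fit_step_preserves[OF assms(1)] by (simp add: pack_def)
qed

lemma ffd_bfd_any_fit:
  assumes "alg = ffd \<or> alg = bfd" and "\<forall>x\<in>set xs. 0 \<le> w x \<and> w x \<le> c"
  shows "any_fit_packing c w (alg c w xs) \<and> mset (concat (alg c w xs)) = mset xs"
  using assms(1)
proof
  assume "alg = ffd"
  then show ?thesis
    using pack_any_fit[OF ff_insert_any_fit_step assms(2)] by (simp add: ffd_def)
next
  assume "alg = bfd"
  then show ?thesis
    using pack_any_fit[OF bf_insert_any_fit_step assms(2)] by (simp add: bfd_def)
qed

lemma length_le_if_pairwise_overfull: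
  fixes l :: "'a \<Rightarrow> real"
  assumes "sorted_wrt (\<lambda>u v. c < l u + l v) B" and "2 \<le> length B"
  shows "real (length B) * c \<le> 2 * sum_list (map l B)"
  using assms
proof (induction B rule: induct_list012)
  case (3 u v B)
  have uv: "c < l u + l v" and sorted: "sorted_wrt (\<lambda>u v. c < l u + l v) B"
    and uB: "\<forall>z\<in>set B. c < l u + l z" and vB: "\<forall>z\<in>set B. c < l v + l z"
    using "3.prems"(1) by auto
  consider "B = []" | z where "B = [z]" | "2 \<le> length B"
    by (cases B; cases "tl B") auto
  then show ?case
  proof cases
    case 1
    then show ?thesis using uv by simp
  next
    case (2 z)
    then show ?thesis using uv uB vB by simp
  next
    case 3
    then have "real (length B) * c \<le> 2 * sum_list (map l B)"
      using "3.IH"(1) sorted by blast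
    then show ?thesis using uv by (simp add: algebra_simps)
  qed
qed auto

lemma length_le_if_any_fit_packing:
  assumes "any_fit_packing c w B" and "0 < c" and "c \<le> 2 * sum_list (map (load w) B)"
  shows "real (length B) \<le> 2 * sum_list (map (load w) B) / c"
proof (cases "2 \<le> length B")
  case True
  then show ?thesis
    using length_le_if_pairwise_overfull[of c "load w" B] assms
    by (simp add: any_fit_packing_def field_simps)
next
  case False
  then have "real (length B) \<le> 1" by simp
  also have "1 \<le> 2 * sum_list (map (load w) B) / c"
    using assms(2,3) by simp
  finally show ?thesis .
qed

lemma ffd_bfd_bins:
  assumes "alg = ffd \<or> alg = bfd" and "decreasing_order w X Xs"
    and "\<forall>x\<in>set X. 0 \<le> w x \<and> w x \<le> c" and "0 < c" and "c \<le> 2 * sum_list (map w X)"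
  shows "mset (concat (alg c w Xs)) = mset X"
    and "sum_list (map (load w) (alg c w Xs)) = sum_list (map w X)"
    and "\<forall>bin\<in>set (alg c w Xs). load w bin \<le> c"
    and "real (length (alg c w Xs)) \<le> 2 * sum_list (map w X) / c"
proof -
  have "mset Xs = mset X"
    using assms(2) by (simp add: decreasing_order_def)
  moreover from this have "\<forall>x\<in>set Xs. 0 \<le> w x \<and> w x \<le> c"
    using assms(3) by (metis set_mset_mset)
  ultimately have packing: "any_fit_packing c w (alg c w Xs)"
    and mset_bins: "mset (concat (alg c w Xs)) = mset X"
    using ffd_bfd_any_fit[OF assms(1)] by auto
  have total: "sum_list (map (load w) (alg c w Xs)) = sum_list (map w X)"
    unfolding sum_list_map_load by (metis mset_bins mset_map sum_mset_sum_list)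
  show "mset (concat (alg c w Xs)) = mset X"
    by (fact mset_bins)
  show "sum_list (map (load w) (alg c w Xs)) = sum_list (map w X)"
    by (fact total)
  show "\<forall>bin\<in>set (alg c w Xs). load w bin \<le> c"
    using packing by (simp add: any_fit_packing_def)
  show "real (length (alg c w Xs)) \<le> 2 * sum_list (map w X) / c"
    using length_le_if_any_fit_packing[OF packing assms(4)] assms(5) total by simp
qed

lemma length_pair_reducers: "length (pair_reducers BX BY) = length BX * length BY"
  unfolding pair_reducers_def by (induction BX) auto

lemma sum_reducer:
  assumes "distinct (concat BX @ concat BY)" and "xbin \<in> set BX" and "ybin \<in> set BY"
  shows "sum w (set xbin \<union> set ybin) = load w xbin + load w ybin"
proof -
  have "distinct (xbin @ ybin)"
    using assms by (auto simp: distinct_concat_iff)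
  then show ?thesis
    by (metis load_def map_append set_append sum_list_append sum_list_distinct_conv_sum_set)
qed

lemma pair_reducers_x2y_mapping_schema:
  assumes "set (concat BX) = set X" and "set (concat BY) = set Y"
    and "distinct (concat BX @ concat BY)"
    and "\<forall>xbin\<in>set BX. load w xbin \<le> cx" and "\<forall>ybin\<in>set BY. load w ybin \<le> cy"
  shows "x2y_mapping_schema (cx + cy) w X Y (pair_reducers BX BY)"
  unfolding x2y_mapping_schema_def pair_reducers_def
proof (intro conjI ballI)
  fix r assume "r \<in> set [set xbin \<union> set ybin. xbin \<leftarrow> BX, ybin \<leftarrow> BY]"
  then obtain xbin ybin where r: "xbin \<in> set BX" "ybin \<in> set BY" "r = set xbin \<union> set ybin"
    by auto
  then show "r \<subseteq> set X \<union> set Y"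
    using assms(1,2) by auto
  show "sum w r \<le> cx + cy"
    using r sum_reducer[OF assms(3) r(1,2)] assms(4,5) by (simp add: add_mono)
next
  fix x y assume "x \<in> set X" "y \<in> set Y"
  then have "x \<in> set (concat BX)" "y \<in> set (concat BY)"
    using assms(1,2) by simp_all
  then obtain xbin ybin where "xbin \<in> set BX" "x \<in> set xbin" "ybin \<in> set BY" "y \<in> set ybin"
    by (auto simp only: set_concat)
  then show "\<exists>r\<in>set [set xbin \<union> set ybin. xbin \<leftarrow> BX, ybin \<leftarrow> BY]. x \<in> r \<and> y \<in> r"
    by force
qed

lemma comm_cost_pair_reducers:
  assumes "distinct (concat BX @ concat BY)"
  shows "comm_cost w (pair_reducers BX BY) =
    real (length BY) * sum_list (map (load w) BX) + real (length BX) * sum_list (map (load w) BY)"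
proof -
  have "comm_cost w (pair_reducers BX BY) =
      (\<Sum>xbin\<leftarrow>BX. \<Sum>ybin\<leftarrow>BY. sum w (set xbin \<union> set ybin))"
    unfolding comm_cost_def pair_reducers_def by (induction BX) (auto simp: comp_def)
  also have "\<dots> = (\<Sum>xbin\<leftarrow>BX. \<Sum>ybin\<leftarrow>BY. load w xbin + load w ybin)"
    using sum_reducer[OF assms] by (intro arg_cong[where f = sum_list] map_cong refl) auto
  also have "\<dots> = real (length BY) * sum_list (map (load w) BX) + real (length BX) * sum_list (map (load w) BY)"
    by (simp add: sum_list_addf sum_list_triv sum_list_const_mult)
  finally show ?thesis .
qed

theorem theorem15:
  fixes b q :: real and w :: "'a \<Rightarrow> real" and X Y Xs Ys :: "'a list"
    and alg :: "real \<Rightarrow> ('a \<Rightarrow> real) \<Rightarrow> 'a list \<Rightarrow> 'a list list"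
  assumes "b > 0" and "q = 2 * b"
    and "distinct X" and "distinct Y" and "set X \<inter> set Y = {}"
    and "\<forall>x\<in>set X \<union> set Y. 0 < w x \<and> w x \<le> b"
    and "sum_list (map w X) > q" and "sum_list (map w Y) > q"
    and "alg = ffd \<or> alg = bfd"
    and "decreasing_order w X Xs" and "decreasing_order w Y Ys"
  shows "x2y_mapping_schema q w X Y (pair_reducers (alg b w Xs) (alg b w Ys)) \<and>
         real (length (pair_reducers (alg b w Xs) (alg b w Ys)))
           \<le> 4 * sum_list (map w X) * sum_list (map w Y) / b ^ 2 \<and>
         comm_cost w (pair_reducers (alg b w Xs) (alg b w Ys))
           \<le> 4 * sum_list (map w X) * sum_list (map w Y) / b"
proof -
  define BX BY Sx Sy where "BX = alg b w Xs" and "BY = alg b w Ys"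
    and "Sx = sum_list (map w X)" and "Sy = sum_list (map w Y)"
  have weights: "\<forall>x\<in>set X. 0 \<le> w x \<and> w x \<le> b" "\<forall>y\<in>set Y. 0 \<le> w y \<and> w y \<le> b"
    using assms(6) by (auto simp: less_imp_le)
  note bins_X = ffd_bfd_bins[OF assms(9,10) weights(1) assms(1), folded BX_def Sx_def]
  note bins_Y = ffd_bfd_bins[OF assms(9,11) weights(2) assms(1), folded BY_def Sy_def]
  have "Sx > 0" "Sy > 0" "b \<le> 2 * Sx" "b \<le> 2 * Sy"
    using assms(1,2,7,8) by (auto simp: Sx_def Sy_def)
  note bins_X = bins_X[OF \<open>b \<le> 2 * Sx\<close>] and bins_Y = bins_Y[OF \<open>b \<le> 2 * Sy\<close>]
  have "mset (concat BX @ concat BY) = mset (X @ Y)"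
    using bins_X(1) bins_Y(1) by simp
  then have distinct: "distinct (concat BX @ concat BY)"
    using assms(3-5) mset_eq_imp_distinct_iff by fastforce
  have "x2y_mapping_schema (b + b) w X Y (pair_reducers BX BY)"
    using bins_X(1,3) bins_Y(1,3) distinct
    by (intro pair_reducers_x2y_mapping_schema) (metis set_mset_mset)+
  moreover have "real (length BX) * real (length BY) \<le> (2 * Sx / b) * (2 * Sy / b)"
    using bins_X(4) bins_Y(4) by (intro mult_mono) auto
  moreover have "real (length BY) * Sx + real (length BX) * Sy \<le> (2 * Sy / b) * Sx + (2 * Sx / b) * Sy"
    using bins_X(4) bins_Y(4) \<open>Sx > 0\<close> \<open>Sy > 0\<close> by (intro add_mono mult_right_mono) auto
  ultimately show ?thesis
    using assms(2) comm_cost_pair_reducers[OF distinct, of w] bins_X(2) bins_Y(2)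
    by (simp add: BX_def BY_def Sx_def Sy_def length_pair_reducers power2_eq_square field_simps)
qed

end
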